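(* Let $P$ be a poset, $I$ a non-empty index set, and $\mathcal{U}_i$ a maximal join-specification for $P$ for each $i\in I$. Then $\bigcap_{i\in I}\mathcal{U}_i$ is also maximal.
   Context: A join-specification for $P$ is a set $\mathcal{U}\subseteq\wp(P)$ such that $\bigvee S$ exists in $P$ for every $S\in\mathcal{U}$ and $\{p\}\in\mathcal{U}$ for every $p\in P$. A $\mathcal{U}$-ideal is a down-closed $C\subseteq P$ with $\bigvee S\in C$ whenever $S\in\mathcal{U}$, $S\subseteq C$; $\Gamma_{\mathcal{U}}(S)$ is the smallest $\mathcal{U}$-ideal containing $S$. $\mathcal{U}^+=\{S\subseteq P:\bigvee S\text{ exists in }P\text{ and }\bigvee S\in\Gamma_{\mathcal{U}}(S)\}$, and $\mathcal{U}$ is maximal if $\mathcal{U}=\mathcal{U}^+$. *)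

theory Defs
  imports Main
begin

text \<open>The poset P is modelled as the whole carrier of a type of class order.\<close>

definition is_join :: "'a::order set \<Rightarrow> 'a \<Rightarrow> bool" where
  "is_join S x \<longleftrightarrow> (\<forall>s\<in>S. s \<le> x) \<and> (\<forall>y. (\<forall>s\<in>S. s \<le> y) \<longrightarrow> x \<le> y)"

definition has_join :: "'a::order set \<Rightarrow> bool" where
  "has_join S \<longleftrightarrow> (\<exists>x. is_join S x)"

definition join :: "'a::order set \<Rightarrow> 'a" where
  "join S = (THE x. is_join S x)"

definition join_spec :: "'a::order set set \<Rightarrow> bool" where
  "join_spec U \<longleftrightarrow> (\<forall>S\<in>U. has_join S) \<and> (\<forall>p. {p} \<in> U)"

definition U_ideal :: "'a::order set set \<Rightarrow> 'a set \<Rightarrow> bool" where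
  "U_ideal U C \<longleftrightarrow> (\<forall>x y. y \<in> C \<longrightarrow> x \<le> y \<longrightarrow> x \<in> C)
                   \<and> (\<forall>S\<in>U. S \<subseteq> C \<longrightarrow> join S \<in> C)"

definition Gamma :: "'a::order set set \<Rightarrow> 'a set \<Rightarrow> 'a set" where
  "Gamma U S = \<Inter>{C. U_ideal U C \<and> S \<subseteq> C}"

definition U_plus :: "'a::order set set \<Rightarrow> 'a set set" where
  "U_plus U = {S. has_join S \<and> join S \<in> Gamma U S}"

definition maximal_join_spec :: "'a::order set set \<Rightarrow> bool" where
  "maximal_join_spec U \<longleftrightarrow> join_spec U \<and> U = U_plus U"

end

theory Submission
  imports Defs
begin

text \<open>The operator \<open>U \<mapsto> U\<^sup>+\<close> is monotone and, on join-specifications, extensive.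
  Hence \<open>(\<Inter>i. U\<^sub>i)\<^sup>+ \<subseteq> \<Inter>i. U\<^sub>i\<^sup>+ = \<Inter>i. U\<^sub>i\<close>, and the reverse inclusion is extensivity.\<close>

lemma U_ideal_antimono: "V \<subseteq> W \<Longrightarrow> U_ideal W C \<Longrightarrow> U_ideal V C"
  unfolding U_ideal_def by (meson subsetD)

lemma Gamma_mono: "V \<subseteq> W \<Longrightarrow> Gamma V S \<subseteq> Gamma W S"
  unfolding Gamma_def by (rule Inter_anti_mono) (auto intro: U_ideal_antimono)

lemma join_in_Gamma: "S \<in> U \<Longrightarrow> join S \<in> Gamma U S"
  unfolding Gamma_def U_ideal_def by auto

lemma U_plus_mono: "V \<subseteq> W \<Longrightarrow> U_plus V \<subseteq> U_plus W"
  unfolding U_plus_def by (auto dest: Gamma_mono[THEN subsetD])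

lemma join_spec_subset_U_plus: "join_spec U \<Longrightarrow> U \<subseteq> U_plus U"
  unfolding join_spec_def U_plus_def by (auto intro: join_in_Gamma)

lemma join_spec_INT:
  assumes "I \<noteq> {}" and "\<And>i. i \<in> I \<Longrightarrow> join_spec (U i)"
  shows "join_spec (\<Inter>i\<in>I. U i)"
  using assms unfolding join_spec_def by auto

theorem lemma2p24:
  fixes I :: "'i set" and U :: "'i \<Rightarrow> 'a::order set set"
  assumes "I \<noteq> {}"
    and "\<And>i. i \<in> I \<Longrightarrow> maximal_join_spec (U i)"
  shows "maximal_join_spec (\<Inter>i\<in>I. U i)"
proof -
  let ?V = "\<Inter>i\<in>I. U i"
  have spec: "join_spec ?V"
    using assms by (intro join_spec_INT) (auto simp: maximal_join_spec_def)
  have "U_plus ?V \<subseteq> U i" if "i \<in> I" for i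
  proof -
    have "U_plus ?V \<subseteq> U_plus (U i)"
      using that by (intro U_plus_mono) blast
    also have "\<dots> = U i"
      using assms(2)[OF that] unfolding maximal_join_spec_def by simp
    finally show ?thesis .
  qed
  then have "U_plus ?V \<subseteq> ?V"
    by blast
  with join_spec_subset_U_plus[OF spec] have "?V = U_plus ?V"
    by (rule equalityI)
  with spec show ?thesis
    unfolding maximal_join_spec_def by blast
qed

end
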